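(* If $\Delta\subset\mathbb{R}^2$ is a non-empty minimal lattice polygon with $\operatorname{lw}(\Delta)=d>0$, then $\operatorname{ls}_\square(\Delta)=d$; that is, there is a unimodular transformation $\varphi$ with $\varphi(\Delta)\subset[0,d]\times[0,d]$.
   Context: A lattice polygon is the convex hull of a finite non-empty set of points of $\mathbb{Z}^2$. For a lattice polygon $\Delta$ and a non-zero primitive $v\in\mathbb{Z}^2$, $\operatorname{lw}_v(\Delta)=\max_{Q\in\Delta}\langle Q,v\rangle-\min_{Q\in\Delta}\langle Q,v\rangle$, and the lattice width is $\operatorname{lw}(\Delta)=\min_v\operatorname{lw}_v(\Delta)$ over all non-zero primitive $v\in\mathbb{Z}^2$. A lattice polygon $\Delta$ is minimal if $\operatorname{lw}(\Delta')<\operatorname{lw}(\Delta)$ for every lattice polygon $\Delta'\subsetneq\Delta$. A unimodular transformation is a map $x\mapsto Ax+b$ with $A\in\mathrm{GL}_2(\mathbb{Z})$, $b\in\mathbb{Z}^2$. With $\square=[0,1]^2$, $\operatorname{ls}_\square(\Delta)$ is the smallest integer $d\ge0$ such that some unimodular transformation maps $\Delta$ into $d\square=[0,d]^2$. *)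

theory Defs
  imports "HOL-Analysis.Analysis"
begin

definition lattice_pt :: "int \<times> int \<Rightarrow> real \<times> real" where
  "lattice_pt p = (real_of_int (fst p), real_of_int (snd p))"

definition lattice_polygon :: "(real \<times> real) set \<Rightarrow> bool" where
  "lattice_polygon P \<longleftrightarrow>
     (\<exists>S :: (int \<times> int) set. finite S \<and> S \<noteq> {} \<and> P = convex hull (lattice_pt ` S))"

definition primitive :: "int \<times> int \<Rightarrow> bool" where
  "primitive v \<longleftrightarrow> v \<noteq> (0, 0) \<and> gcd (fst v) (snd v) = 1"

definition pair_ip :: "real \<times> real \<Rightarrow> int \<times> int \<Rightarrow> real" where
  "pair_ip Q v = fst Q * real_of_int (fst v) + snd Q * real_of_int (snd v)"

definition lw_dir :: "(real \<times> real) set \<Rightarrow> int \<times> int \<Rightarrow> real" where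
  "lw_dir P v = (SUP Q\<in>P. pair_ip Q v) - (INF Q\<in>P. pair_ip Q v)"

definition lattice_width :: "(real \<times> real) set \<Rightarrow> real" where
  "lattice_width P = (INF v\<in>{v. primitive v}. lw_dir P v)"

definition minimal_polygon :: "(real \<times> real) set \<Rightarrow> bool" where
  "minimal_polygon P \<longleftrightarrow> lattice_polygon P \<and>
     (\<forall>P'. lattice_polygon P' \<and> P' \<subset> P \<longrightarrow> lattice_width P' < lattice_width P)"

definition unimodular :: "(real \<times> real \<Rightarrow> real \<times> real) \<Rightarrow> bool" where
  "unimodular f \<longleftrightarrow> (\<exists>a b c e t1 t2 :: int. \<bar>a * e - b * c\<bar> = 1 \<and>
     f = (\<lambda>(x, y). (of_int a * x + of_int b * y + of_int t1,
                    of_int c * x + of_int e * y + of_int t2)))"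

definition ls_square :: "(real \<times> real) set \<Rightarrow> nat" where
  "ls_square P = (LEAST d::nat. \<exists>\<phi>. unimodular \<phi> \<and>
                     \<phi> ` P \<subseteq> {0..real d} \<times> {0..real d})"

end

theory Submission
  imports Defs
begin

text \<open>Let \<open>w\<^sub>1\<close> be a primitive direction realising the lattice width \<open>d\<close> of \<open>P\<close>. It suffices
  to find \<open>u\<close> with \<open>det(w\<^sub>1, u) = \<plusminus>1\<close> and width at most \<open>d\<close> in direction \<open>u\<close>: the map
  \<open>x \<mapsto> (\<langle>u, x\<rangle>, \<langle>w\<^sub>1, x\<rangle>)\<close>, suitably translated, sends \<open>P\<close> into \<open>[0, d]\<^sup>2\<close>, and no
  unimodular map does better because its first row is a primitive direction.
  If no such \<open>u\<close> existed, writing \<open>det(w\<^sub>1, w) u = w + c w\<^sub>1\<close> with \<open>|c| \<le> |det(w\<^sub>1, w)|/2\<close>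
  would show that every direction \<open>w\<close> has width at least \<open>d + |det(w\<^sub>1, w)|\<close>. But \<open>P\<close>, not
  being a segment, has a vertex \<open>v\<close> with a point of the remaining polygon on the line through
  \<open>v\<close> orthogonal to \<open>w\<^sub>1\<close>, hence also one at most one lattice step away from \<open>v\<close> along that line.
  Deleting \<open>v\<close> then costs at most \<open>|det(w\<^sub>1, w)|\<close> of width in every direction \<open>w\<close>, so the
  smaller lattice polygon still has lattice width \<open>d\<close>, contradicting minimality.\<close>

definition idot :: "int \<times> int \<Rightarrow> int \<times> int \<Rightarrow> int" where
  "idot p w = fst p * fst w + snd p * snd w"

definition iwidth :: "(int \<times> int) set \<Rightarrow> int \<times> int \<Rightarrow> int" where
  "iwidth S w = Max ((\<lambda>p. idot p w) ` S) - Min ((\<lambda>p. idot p w) ` S)"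

definition det2 :: "int \<times> int \<Rightarrow> int \<times> int \<Rightarrow> int" where
  "det2 u w = fst u * snd w - snd u * fst w"

definition lattice_points :: "(real \<times> real) set \<Rightarrow> (int \<times> int) set" where
  "lattice_points P = {p. lattice_pt p \<in> P}"

lemma lattice_pt_inj: "inj lattice_pt"
  by (rule injI) (simp add: lattice_pt_def prod_eq_iff)

lemma pair_ip_lattice_pt: "pair_ip (lattice_pt p) w = of_int (idot p w)"
  by (simp add: pair_ip_def lattice_pt_def idot_def)

lemma pair_ip_eq_inner: "pair_ip z w = inner (real_of_int (fst w), real_of_int (snd w)) z"
  by (cases z) (simp add: pair_ip_def mult.commute)

lemma idot_add: "idot p (x + y) = idot p x + idot p y"
  by (simp add: idot_def algebra_simps)

lemma idot_scale: "idot p (k * fst x, k * snd x) = k * idot p x"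
  by (simp add: idot_def algebra_simps)

section \<open>Width of a finite set of lattice points\<close>

lemma idot_diff_le_iwidth: "finite S \<Longrightarrow> p \<in> S \<Longrightarrow> q \<in> S \<Longrightarrow> idot p w - idot q w \<le> iwidth S w"
  unfolding iwidth_def by (intro diff_mono) simp_all

lemma iwidth_attained:
  assumes "finite S" "S \<noteq> {}"
  obtains p q where "p \<in> S" "q \<in> S" "iwidth S w = idot p w - idot q w"
proof -
  have "Max ((\<lambda>p. idot p w) ` S) \<in> (\<lambda>p. idot p w) ` S"
    "Min ((\<lambda>p. idot p w) ` S) \<in> (\<lambda>p. idot p w) ` S"
    using assms by simp_all
  then obtain p q where "p \<in> S" "q \<in> S" "Max ((\<lambda>p. idot p w) ` S) = idot p w"
    "Min ((\<lambda>p. idot p w) ` S) = idot q w"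
    by auto
  then show thesis
    using that unfolding iwidth_def by simp
qed

lemma iwidth_nonneg: "finite S \<Longrightarrow> S \<noteq> {} \<Longrightarrow> 0 \<le> iwidth S w"
  using idot_diff_le_iwidth[of S _ _ w] by fastforce

lemma iwidth_add_le:
  assumes "finite S" "S \<noteq> {}"
  shows "iwidth S (x + y) \<le> iwidth S x + iwidth S y"
proof -
  obtain p q where "p \<in> S" "q \<in> S" "iwidth S (x + y) = idot p (x + y) - idot q (x + y)"
    using iwidth_attained assms by blast
  then show ?thesis
    using idot_diff_le_iwidth[OF assms(1), of p q x] idot_diff_le_iwidth[OF assms(1), of p q y]
    by (simp add: idot_add)
qed

lemma iwidth_scale:
  assumes "finite S" "S \<noteq> {}"
  shows "iwidth S (k * fst x, k * snd x) = \<bar>k\<bar> * iwidth S x"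
proof -
  have diff: "idot p (k * fst x, k * snd x) - idot q (k * fst x, k * snd x)
      = \<bar>k\<bar> * (if k \<ge> 0 then idot p x - idot q x else idot q x - idot p x)" for p q
    by (simp add: idot_scale algebra_simps)
  obtain p q where pq: "p \<in> S" "q \<in> S" "iwidth S (k * fst x, k * snd x)
      = idot p (k * fst x, k * snd x) - idot q (k * fst x, k * snd x)"
    using iwidth_attained assms by blast
  obtain p' q' where pq': "p' \<in> S" "q' \<in> S" "iwidth S x = idot p' x - idot q' x"
    using iwidth_attained assms by blast
  have "iwidth S (k * fst x, k * snd x) \<le> \<bar>k\<bar> * iwidth S x"
    using pq diff[of p q] idot_diff_le_iwidth[OF assms(1), of _ _ x]
    by (simp add: mult_left_mono)
  moreover have "\<bar>k\<bar> * iwidth S x \<le> iwidth S (k * fst x, k * snd x)"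
    using pq' diff[of p' q'] diff[of q' p']
      idot_diff_le_iwidth[OF assms(1), of p' q' "(k * fst x, k * snd x)"]
      idot_diff_le_iwidth[OF assms(1), of q' p' "(k * fst x, k * snd x)"]
    by (cases "k \<ge> 0") simp_all
  ultimately show ?thesis by simp
qed

section \<open>Lattice polygons\<close>

lemma pair_ip_hull_bounds:
  assumes "finite S" "z \<in> convex hull (lattice_pt ` S)"
  shows "of_int (Min ((\<lambda>p. idot p w) ` S)) \<le> pair_ip z w"
    and "pair_ip z w \<le> of_int (Max ((\<lambda>p. idot p w) ` S))"
proof -
  let ?m = "of_int (Min ((\<lambda>p. idot p w) ` S))" and ?M = "of_int (Max ((\<lambda>p. idot p w) ` S))"
  have "convex {z. ?m \<le> pair_ip z w}" "convex {z. pair_ip z w \<le> ?M}"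
    unfolding pair_ip_eq_inner by (simp_all add: convex_halfspace_ge convex_halfspace_le)
  moreover have "lattice_pt ` S \<subseteq> {z. ?m \<le> pair_ip z w}" "lattice_pt ` S \<subseteq> {z. pair_ip z w \<le> ?M}"
    using assms(1) by (auto simp: pair_ip_lattice_pt)
  ultimately have "convex hull (lattice_pt ` S) \<subseteq> {z. ?m \<le> pair_ip z w}"
    "convex hull (lattice_pt ` S) \<subseteq> {z. pair_ip z w \<le> ?M}"
    by (simp_all add: hull_minimal)
  with assms(2) show "?m \<le> pair_ip z w" "pair_ip z w \<le> ?M"
    by auto
qed

lemma lw_dir_convex_hull:
  assumes "finite S" "S \<noteq> {}"
  shows "lw_dir (convex hull (lattice_pt ` S)) w = of_int (iwidth S w)"
proof -
  let ?P = "convex hull (lattice_pt ` S)"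
  have "Max ((\<lambda>p. idot p w) ` S) \<in> (\<lambda>p. idot p w) ` S"
    "Min ((\<lambda>p. idot p w) ` S) \<in> (\<lambda>p. idot p w) ` S"
    using assms by simp_all
  then obtain p q where p: "p \<in> S" "Max ((\<lambda>p. idot p w) ` S) = idot p w"
    and q: "q \<in> S" "Min ((\<lambda>p. idot p w) ` S) = idot q w"
    by auto
  have "of_int (idot p w) \<in> (\<lambda>Q. pair_ip Q w) ` ?P" "of_int (idot q w) \<in> (\<lambda>Q. pair_ip Q w) ` ?P"
    using p q by (metis hull_inc image_eqI pair_ip_lattice_pt)+
  then have "(SUP Q\<in>?P. pair_ip Q w) = of_int (idot p w)"
    and "(INF Q\<in>?P. pair_ip Q w) = of_int (idot q w)"
    using pair_ip_hull_bounds[OF assms(1), of _ w] p q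
    by (auto intro!: cSup_eq_maximum cInf_eq_minimum simp: pair_ip_lattice_pt)
  then show ?thesis
    using p q by (simp add: lw_dir_def iwidth_def)
qed

lemma finite_lattice_points_compact: "compact P \<Longrightarrow> finite (lattice_points P)"
proof -
  assume "compact P"
  then obtain r where r: "\<And>x. x \<in> P \<Longrightarrow> norm x \<le> r"
    by (meson bounded_iff compact_imp_bounded)
  have "lattice_points P \<subseteq> {-\<lceil>r\<rceil>..\<lceil>r\<rceil>} \<times> {-\<lceil>r\<rceil>..\<lceil>r\<rceil>}"
  proof
    fix p assume "p \<in> lattice_points P"
    then have "norm (lattice_pt p) \<le> r" by (simp add: lattice_points_def r)
    then have "\<bar>real_of_int (fst p)\<bar> \<le> r" "\<bar>real_of_int (snd p)\<bar> \<le> r"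
      using norm_fst_le[of "real_of_int (fst p)" "real_of_int (snd p)"]
        norm_snd_le[of "real_of_int (snd p)" "real_of_int (fst p)"]
      by (simp_all add: lattice_pt_def)
    then show "p \<in> {-\<lceil>r\<rceil>..\<lceil>r\<rceil>} \<times> {-\<lceil>r\<rceil>..\<lceil>r\<rceil>}"
      by (cases p) (auto simp: abs_le_iff; linarith)
  qed
  then show ?thesis by (rule finite_subset) simp
qed

lemma lattice_polygon_lattice_points:
  assumes "lattice_polygon P"
  shows "finite (lattice_points P)" "lattice_points P \<noteq> {}"
    and "P = convex hull (lattice_pt ` lattice_points P)"
proof -
  obtain S where S: "finite S" "S \<noteq> {}" "P = convex hull (lattice_pt ` S)"
    using assms unfolding lattice_polygon_def by blast
  have "S \<subseteq> lattice_points P"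
    using S(3) by (auto simp: lattice_points_def intro: hull_inc)
  moreover have "convex hull (lattice_pt ` lattice_points P) \<subseteq> P"
    using S(3) by (intro hull_minimal) (auto simp: lattice_points_def)
  ultimately show "P = convex hull (lattice_pt ` lattice_points P)"
    using S(3) by (metis hull_mono image_mono subset_antisym)
  show "finite (lattice_points P)"
    using S by (auto intro: finite_lattice_points_compact compact_convex_hull finite_imp_compact)
  show "lattice_points P \<noteq> {}"
    using S(2) \<open>S \<subseteq> lattice_points P\<close> by blast
qed

lemma lw_dir_lattice_polygon:
  "lattice_polygon P \<Longrightarrow> lw_dir P w = of_int (iwidth (lattice_points P) w)"
  by (metis lattice_polygon_lattice_points lw_dir_convex_hull)

lemma primitive_1_0: "primitive (1, 0)"
  by (simp add: primitive_def)

lemma lattice_width_le_lw_dir: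
  assumes "lattice_polygon P" "primitive w"
  shows "lattice_width P \<le> lw_dir P w"
  unfolding lattice_width_def
proof (rule cINF_lower)
  show "bdd_below (lw_dir P ` {v. primitive v})"
    using iwidth_nonneg[OF lattice_polygon_lattice_points(1,2)[OF assms(1)]]
    by (intro bdd_belowI[where m = 0]) (auto simp: lw_dir_lattice_polygon[OF assms(1)])
qed (use assms in simp)

lemma lattice_width_geI:
  "(\<And>w. primitive w \<Longrightarrow> c \<le> lw_dir P w) \<Longrightarrow> c \<le> lattice_width P"
  unfolding lattice_width_def using primitive_1_0 by (intro cINF_greatest) auto

lemma lattice_width_attained:
  assumes "lattice_polygon P"
  obtains w where "primitive w" "lattice_width P = lw_dir P w"
proof -
  let ?L = "lattice_points P"
  define k where "k = (LEAST k::nat. \<exists>w. primitive w \<and> iwidth ?L w = int k)"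
  have "\<exists>k::nat. \<exists>w. primitive w \<and> iwidth ?L w = int k"
    using primitive_1_0 iwidth_nonneg[of ?L] lattice_polygon_lattice_points[OF assms]
    by (metis nonneg_int_cases)
  then have "\<exists>w. primitive w \<and> iwidth ?L w = int k"
    unfolding k_def by (rule LeastI_ex)
  then obtain w where w: "primitive w" "iwidth ?L w = int k"
    by blast
  have "real k \<le> lw_dir P v" if "primitive v" for v
  proof -
    have "iwidth ?L v = int (nat (iwidth ?L v))"
      using iwidth_nonneg lattice_polygon_lattice_points[OF assms] by simp
    moreover have "k \<le> nat (iwidth ?L v)"
      unfolding k_def using calculation that by (intro Least_le) blast
    ultimately have "int k \<le> iwidth ?L v" by linarith
    then show ?thesis
      unfolding lw_dir_lattice_polygon[OF assms] by (metis of_int_le_iff of_int_of_nat_eq)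
  qed
  then have "lw_dir P w \<le> lattice_width P"
    using w by (intro lattice_width_geI) (simp add: lw_dir_lattice_polygon[OF assms])
  with lattice_width_le_lw_dir[OF assms w(1)] show thesis
    using that w(1) by simp
qed

section \<open>Primitive vectors and determinants\<close>

lemma det2_swap: "det2 u w = - det2 w u"
  by (simp add: det2_def)

lemma det2_unit_imp_primitive:
  assumes "\<bar>det2 u w\<bar> = 1"
  shows "primitive u"
proof -
  have "gcd (fst u) (snd u) dvd det2 u w"
    unfolding det2_def by (simp add: dvd_diff)
  then have "gcd (fst u) (snd u) dvd 1"
    using assms by (metis dvd_abs_iff)
  then have "gcd (fst u) (snd u) = 1"
    by simp
  then show ?thesis
    by (auto simp: primitive_def)
qed

lemma primitive_imp_det2_one:
  assumes "primitive w"
  obtains u where "det2 w u = 1"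
proof -
  obtain s t where "s * fst w + t * snd w = 1"
    using bezout_int[of "fst w" "snd w"] assms by (auto simp: primitive_def)
  then have "det2 w (-t, s) = 1"
    by (simp add: det2_def algebra_simps)
  then show thesis by (rule that)
qed

lemma exists_primitive_orthogonal: "\<exists>w. primitive w \<and> idot A w = idot B w"
proof (cases "A = B")
  case True
  then show ?thesis using primitive_1_0 by blast
next
  case False
  define a b where "a = fst A - fst B" and "b = snd A - snd B"
  define g where "g = gcd a b"
  have "a \<noteq> 0 \<or> b \<noteq> 0"
    using False by (auto simp: a_def b_def prod_eq_iff)
  then have "gcd (a div g) (b div g) = 1"
    using div_gcd_coprime[of a b] by (simp add: g_def coprime_iff_gcd_eq_1)
  then have "primitive (- (b div g), a div g)"
    by (auto simp: primitive_def gcd.commute)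
  moreover have "a = g * (a div g)" "b = g * (b div g)"
    unfolding g_def by simp_all
  then have "a * (b div g) = b * (a div g)"
    by (metis mult.assoc mult.commute)
  then have "idot A (- (b div g), a div g) = idot B (- (b div g), a div g)"
    by (simp add: idot_def a_def b_def algebra_simps)
  ultimately show ?thesis by blast
qed

lemma exists_near_multiple:
  assumes "(D::int) \<noteq> 0"
  shows "\<exists>k. 2 * \<bar>D * k - b\<bar> \<le> \<bar>D\<bar>"
proof -
  define k where "k = round (of_int b / of_int D :: real)"
  have "\<bar>of_int (D * k - b)\<bar> = \<bar>of_int D\<bar> * \<bar>of_int k - of_int b / (of_int D :: real)\<bar>"
    using assms by (simp add: abs_mult[symmetric] algebra_simps)
  also have "\<dots> \<le> \<bar>of_int D\<bar> * (1 / 2)"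
    unfolding k_def by (intro mult_left_mono of_int_round_abs_le) simp
  finally have "real_of_int (2 * \<bar>D * k - b\<bar>) \<le> real_of_int \<bar>D\<bar>" by simp
  then have "2 * \<bar>D * k - b\<bar> \<le> \<bar>D\<bar>" by (simp only: of_int_le_iff)
  then show ?thesis by blast
qed

text \<open>Given a direction of determinant \<open>\<alpha> \<noteq> 0\<close> with respect to \<open>w\<^sub>1\<close>, the identity
  \<open>\<alpha> u = w + c w\<^sub>1\<close> with \<open>|c| \<le> |\<alpha>|/2\<close> produces a direction \<open>u\<close> of determinant 1.\<close>
lemma iwidth_det_reduction:
  assumes S: "finite S" "S \<noteq> {}" and u0: "det2 w1 u0 = 1" and nz: "det2 w1 w \<noteq> 0"
  obtains u where "det2 w1 u = 1"
    "2 * \<bar>det2 w1 w\<bar> * iwidth S u \<le> 2 * iwidth S w + \<bar>det2 w1 w\<bar> * iwidth S w1"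
proof -
  define \<alpha> where "\<alpha> = det2 w1 w"
  obtain k where k: "2 * \<bar>\<alpha> * k - det2 w u0\<bar> \<le> \<bar>\<alpha>\<bar>"
    using exists_near_multiple nz unfolding \<alpha>_def by blast
  define u where "u = (fst u0 + k * fst w1, snd u0 + k * snd w1)"
  define c where "c = \<alpha> * k - det2 w u0"
  have "det2 w1 u = 1"
    using u0 by (simp add: u_def det2_def algebra_simps)
  have "\<alpha> * fst u0 + det2 w u0 * fst w1 = fst w * det2 w1 u0"
    "\<alpha> * snd u0 + det2 w u0 * snd w1 = snd w * det2 w1 u0"
    by (simp_all add: \<alpha>_def det2_def algebra_simps)
  then have decomp: "(\<alpha> * fst u, \<alpha> * snd u) = w + (c * fst w1, c * snd w1)"
    using u0 by (simp add: u_def c_def prod_eq_iff algebra_simps)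
  have "\<bar>\<alpha>\<bar> * iwidth S u \<le> iwidth S w + \<bar>c\<bar> * iwidth S w1"
    using iwidth_add_le[OF S, of w "(c * fst w1, c * snd w1)"]
    by (simp add: iwidth_scale[OF S, symmetric] decomp)
  moreover have "2 * \<bar>c\<bar> * iwidth S w1 \<le> \<bar>\<alpha>\<bar> * iwidth S w1"
    using k iwidth_nonneg[OF S] unfolding c_def by (simp add: mult_right_mono)
  ultimately show thesis
    using that \<open>det2 w1 u = 1\<close> unfolding \<alpha>_def by fastforce
qed

lemma iwidth_ge_det:
  assumes S: "finite S" "S \<noteq> {}" and w1: "primitive w1" "iwidth S w1 \<le> d"
    and unit: "\<And>u. \<bar>det2 w1 u\<bar> = 1 \<Longrightarrow> d + 1 \<le> iwidth S u"
    and nz: "det2 w1 w \<noteq> 0"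
  shows "d + \<bar>det2 w1 w\<bar> \<le> iwidth S w"
proof (cases "\<bar>det2 w1 w\<bar> = 1")
  case True
  then show ?thesis using unit by simp
next
  case False
  define A where "A = \<bar>det2 w1 w\<bar>"
  have "2 \<le> A" using False nz unfolding A_def by linarith
  obtain u0 where "det2 w1 u0 = 1"
    using primitive_imp_det2_one[OF w1(1)] .
  then obtain u where u: "det2 w1 u = 1" "2 * A * iwidth S u \<le> 2 * iwidth S w + A * iwidth S w1"
    using iwidth_det_reduction[OF S _ nz] unfolding A_def by blast
  have "2 * A * (d + 1) \<le> 2 * A * iwidth S u"
    using unit[of u] u(1) \<open>2 \<le> A\<close> by simp
  moreover have "A * iwidth S w1 \<le> A * d"
    using w1(2) \<open>2 \<le> A\<close> by simp
  moreover have "2 * d \<le> A * d"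
    using \<open>2 \<le> A\<close> iwidth_nonneg[OF S, of w1] w1(2) by (intro mult_right_mono) auto
  ultimately show ?thesis
    using u(2) unfolding A_def by (simp add: algebra_simps)
qed

section \<open>Removing a vertex\<close>

lemma iwidth_insert_le:
  assumes "finite S" "q \<in> convex hull (lattice_pt ` S)"
    and "\<bar>pair_ip q w - of_int (idot v w)\<bar> \<le> \<delta>"
  shows "of_int (iwidth (insert v S) w) \<le> of_int (iwidth S w) + \<delta>"
proof -
  let ?m = "Min ((\<lambda>p. idot p w) ` S)" and ?M = "Max ((\<lambda>p. idot p w) ` S)"
  have "S \<noteq> {}" using assms(2) by auto
  then have "iwidth (insert v S) w = max (idot v w) ?M - min (idot v w) ?m"
    using assms(1) by (simp add: iwidth_def)
  moreover have "of_int ?m \<le> pair_ip q w" "pair_ip q w \<le> of_int ?M"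
    using pair_ip_hull_bounds[OF assms(1,2)] by auto
  ultimately show ?thesis
    using assms(3) by (auto simp: iwidth_def max_def min_def abs_le_iff)
qed

lemma exists_level_point_in_hull:
  assumes "p \<in> S" "q \<in> S" "idot p w \<le> c" "c \<le> idot q w"
  shows "\<exists>z\<in>convex hull (lattice_pt ` S). pair_ip z w = of_int c"
  using connected_ivt_hyperplane[of "convex hull (lattice_pt ` S)" "lattice_pt p" "lattice_pt q"
      "(of_int (fst w), of_int (snd w))" "of_int c"] assms
  by (auto simp: convex_connected hull_inc pair_ip_eq_inner[symmetric] pair_ip_lattice_pt)

lemma segment_iwidth_zero:
  assumes "finite L" "L \<noteq> {}" "lattice_pt ` L \<subseteq> convex hull (lattice_pt ` {A, B})"
  obtains w where "primitive w" "iwidth L w = 0"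
proof -
  obtain w where w: "primitive w" "idot A w = idot B w"
    using exists_primitive_orthogonal by blast
  have "idot p w = idot A w" if "p \<in> L" for p
    using pair_ip_hull_bounds[of "{A, B}" "lattice_pt p" w] assms(3) that w(2)
    by (auto simp: pair_ip_lattice_pt)
  moreover obtain p q where "p \<in> L" "q \<in> L" "iwidth L w = idot p w - idot q w"
    using iwidth_attained[OF assms(1,2)] .
  ultimately show thesis
    using that w(1) by simp
qed

lemma exists_vertex_with_level_witness:
  assumes P: "lattice_polygon P" and L: "L = lattice_points P"
    and two_dim: "\<And>w. primitive w \<Longrightarrow> 0 < iwidth L w"
  obtains v q where "v \<in> L" "lattice_pt v extreme_point_of P"
    "q \<in> convex hull (lattice_pt ` (L - {v}))" "pair_ip q w1 = of_int (idot v w1)"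
proof -
  note witness = that
  note L_props = lattice_polygon_lattice_points[OF P, folded L]
  have "Min ((\<lambda>p. idot p w1) ` L) \<in> (\<lambda>p. idot p w1) ` L"
    "Max ((\<lambda>p. idot p w1) ` L) \<in> (\<lambda>p. idot p w1) ` L"
    using L_props by simp_all
  then obtain B T where "B \<in> L" "T \<in> L" "idot B w1 = Min ((\<lambda>p. idot p w1) ` L)"
    "idot T w1 = Max ((\<lambda>p. idot p w1) ` L)"
    by auto
  then have BT: "idot B w1 \<le> idot p w1 \<and> idot p w1 \<le> idot T w1" if "p \<in> L" for p
    using L_props(1) that by simp
  show thesis
  proof (rule ccontr)
    assume no_witness: "\<not> thesis"
    \<comment> \<open>By the intermediate value theorem every vertex is \<open>B\<close> or \<open>T\<close>, so \<open>P\<close> is a segment.\<close>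
    have extreme_BT: "x \<in> lattice_pt ` {B, T}" if "x extreme_point_of P" for x
    proof -
      obtain v where v: "v \<in> L" "x = lattice_pt v"
        using extreme_point_of_convex_hull L_props(3) \<open>x extreme_point_of P\<close> by blast
      show ?thesis
      proof (rule ccontr)
        assume "x \<notin> lattice_pt ` {B, T}"
        then have "B \<in> L - {v}" "T \<in> L - {v}"
          using v \<open>B \<in> L\<close> \<open>T \<in> L\<close> by auto
        then have "\<exists>q\<in>convex hull (lattice_pt ` (L - {v})). pair_ip q w1 = of_int (idot v w1)"
          using BT[OF v(1)] by (metis exists_level_point_in_hull)
        then obtain q where q: "q \<in> convex hull (lattice_pt ` (L - {v}))"
          "pair_ip q w1 = of_int (idot v w1)"
          by blast
        show False
          using no_witness witness[OF v(1) that[unfolded v(2)] q] by contradiction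
      qed
    qed
    have "compact P" "convex P"
      using L_props by (metis compact_convex_hull finite_imageI finite_imp_compact convex_convex_hull)+
    then have "P = convex hull {x. x extreme_point_of P}"
      by (rule Krein_Milman_Minkowski)
    also have "\<dots> \<subseteq> convex hull (lattice_pt ` {B, T})"
      using extreme_BT by (intro hull_mono) blast
    finally have "lattice_pt ` L \<subseteq> convex hull (lattice_pt ` {B, T})"
      using L by (auto simp: lattice_points_def)
    then obtain w where "primitive w" "iwidth L w = 0"
      using segment_iwidth_zero[OF L_props(1,2)] by blast
    then show False
      using two_dim by fastforce
  qed
qed

lemma orthogonal_multiple:
  fixes a b x y :: real
  assumes "a * x + b * y = 0" "a \<noteq> 0 \<or> b \<noteq> 0"
  obtains \<mu> where "x = - b * \<mu>" "y = a * \<mu>"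
proof
  have "a\<^sup>2 + b\<^sup>2 \<noteq> 0" using assms(2) by (simp add: sum_power2_eq_zero_iff)
  then show "x = - b * ((a * y - b * x) / (a\<^sup>2 + b\<^sup>2))" "y = a * ((a * y - b * x) / (a\<^sup>2 + b\<^sup>2))"
    using assms(1) by (simp_all add: field_simps power2_eq_square; algebra)+
qed

text \<open>The point \<open>q\<close> is \<open>q\<^sub>0 = v + \<mu> w\<^sub>1\<^sup>\<perp>\<close> itself if \<open>|\<mu>| \<le> 1\<close>, and otherwise the lattice point
  \<open>v \<plusminus> w\<^sub>1\<^sup>\<perp>\<close>, which lies between \<open>v\<close> and \<open>q\<^sub>0\<close>.\<close>
lemma exists_point_near_vertex:
  assumes P: "convex P" and L: "L = lattice_points P" and v: "v \<in> L" and w1: "w1 \<noteq> (0, 0)"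
    and q0: "q0 \<in> convex hull (lattice_pt ` (L - {v}))" "pair_ip q0 w1 = of_int (idot v w1)"
  obtains q where "q \<in> convex hull (lattice_pt ` (L - {v}))"
    "\<And>w. \<bar>pair_ip q w - of_int (idot v w)\<bar> \<le> \<bar>of_int (det2 w1 w)\<bar>"
proof -
  obtain a b where w1_eq: "w1 = (a, b)" by fastforce
  obtain x0 y0 where q0_eq: "q0 = (x0, y0)" by fastforce
  obtain v1 v2 where v_eq: "v = (v1, v2)" by fastforce
  have "of_int a * (x0 - of_int v1) + of_int b * (y0 - of_int v2) = (0::real)"
    using q0(2) by (simp add: w1_eq q0_eq v_eq pair_ip_def idot_def algebra_simps)
  then obtain \<mu> where "x0 - of_int v1 = - of_int b * \<mu>" "y0 - of_int v2 = of_int a * \<mu>"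
    by (rule orthogonal_multiple) (use w1 in \<open>auto simp: w1_eq\<close>)
  then have \<mu>: "x0 = of_int v1 - of_int b * \<mu>" "y0 = of_int v2 + of_int a * \<mu>"
    by linarith+
  have offset: "pair_ip q0 w - of_int (idot v w) = \<mu> * of_int (det2 w1 w)" for w
    by (simp add: w1_eq q0_eq v_eq \<mu> pair_ip_def idot_def det2_def algebra_simps)
  show thesis
  proof (cases "\<bar>\<mu>\<bar> \<le> 1")
    case True
    then show thesis
      using that[OF q0(1)] by (simp add: offset abs_mult mult_left_le_one_le)
  next
    case False
    define s :: int where "s = (if \<mu> > 0 then 1 else -1)"
    define z where "z = (v1 - s * b, v2 + s * a)"
    define t where "t = 1 / \<bar>\<mu>\<bar>"
    have "t * \<mu> = of_int s"
      using False by (auto simp: t_def s_def)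
    then have "lattice_pt z = (1 - t) *\<^sub>R lattice_pt v + t *\<^sub>R q0"
      by (simp add: z_def lattice_pt_def v_eq q0_eq \<mu> algebra_simps)
    moreover have "lattice_pt v \<in> P" "q0 \<in> P"
      using v q0(1) P hull_minimal[of "lattice_pt ` (L - {v})" P convex]
      by (auto simp: L lattice_points_def)
    moreover have "0 \<le> t" "t \<le> 1"
      using False by (auto simp: t_def)
    ultimately have "z \<in> L"
      using P by (simp add: L lattice_points_def convex_def)
    moreover have "z \<noteq> v"
      using w1 by (auto simp: z_def v_eq w1_eq s_def)
    ultimately have "lattice_pt z \<in> convex hull (lattice_pt ` (L - {v}))"
      by (simp add: hull_inc)
    moreover have "idot z w - idot v w = s * det2 w1 w" for w
      by (simp add: z_def v_eq w1_eq idot_def det2_def algebra_simps)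
    then have "\<bar>pair_ip (lattice_pt z) w - of_int (idot v w)\<bar> \<le> \<bar>of_int (det2 w1 w)\<bar>" for w
      by (simp add: pair_ip_lattice_pt abs_mult s_def flip: of_int_diff)
    ultimately show thesis
      using that by blast
  qed
qed

lemma convex_hull_remove_extreme_point_psubset:
  assumes "P = convex hull (lattice_pt ` L)" "v \<in> L" "lattice_pt v extreme_point_of P"
  shows "convex hull (lattice_pt ` (L - {v})) \<subset> P"
proof -
  have "convex (P - {lattice_pt v})"
    using assms(1,3) extreme_point_of_stillconvex by blast
  moreover have "lattice_pt ` (L - {v}) \<subseteq> P - {lattice_pt v}"
  proof
    fix x assume "x \<in> lattice_pt ` (L - {v})"
    then obtain p where p: "p \<in> L" "p \<noteq> v" "x = lattice_pt p" by blast
    then have "x \<in> P" using assms(1) by (simp add: hull_inc)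
    moreover have "x \<noteq> lattice_pt v" using p injD[OF lattice_pt_inj] by metis
    ultimately show "x \<in> P - {lattice_pt v}" by simp
  qed
  ultimately have "convex hull (lattice_pt ` (L - {v})) \<subseteq> P - {lattice_pt v}"
    by (rule hull_minimal[rotated])
  moreover have "lattice_pt v \<in> P"
    using assms(3) by (simp add: extreme_point_of_def)
  ultimately show ?thesis by blast
qed

section \<open>Minimal polygons\<close>

lemma lattice_width_remove_vertex_ge:
  assumes P: "lattice_polygon P" and L: "L = lattice_points P" and v: "v \<in> L"
    and q: "q \<in> convex hull (lattice_pt ` (L - {v}))"
      "\<And>w. \<bar>pair_ip q w - of_int (idot v w)\<bar> \<le> \<bar>of_int (det2 w1 w)\<bar>"
    and wide: "\<And>w. primitive w \<Longrightarrow> d + \<bar>det2 w1 w\<bar> \<le> iwidth L w"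
  shows "lattice_polygon (convex hull (lattice_pt ` (L - {v})))"
    and "of_int d \<le> lattice_width (convex hull (lattice_pt ` (L - {v})))"
proof -
  have fin: "finite (L - {v})"
    using lattice_polygon_lattice_points(1)[OF P] L by simp
  moreover have ne: "L - {v} \<noteq> {}"
    using q(1) by (metis convex_hull_empty empty_iff image_empty)
  ultimately show "lattice_polygon (convex hull (lattice_pt ` (L - {v})))"
    unfolding lattice_polygon_def by blast
  show "of_int d \<le> lattice_width (convex hull (lattice_pt ` (L - {v})))"
  proof (rule lattice_width_geI)
    fix w assume "primitive w"
    have "real_of_int (iwidth L w) \<le> of_int (iwidth (L - {v}) w) + \<bar>of_int (det2 w1 w)\<bar>"
      using iwidth_insert_le[OF fin q] v by (simp add: insert_absorb)
    then show "of_int d \<le> lw_dir (convex hull (lattice_pt ` (L - {v}))) w"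
      using wide[OF \<open>primitive w\<close>] unfolding lw_dir_convex_hull[OF fin ne] by linarith
  qed
qed

lemma minimal_polygon_unimodular_partner:
  assumes P: "minimal_polygon P" and w1: "primitive w1" "lattice_width P = lw_dir P w1"
    and pos: "0 < lattice_width P"
  obtains u where "\<bar>det2 w1 u\<bar> = 1" "lw_dir P u \<le> lattice_width P"
proof (rule ccontr)
  note partner = that
  assume no_partner: "\<not> thesis"
  have lp: "lattice_polygon P"
    using P by (simp add: minimal_polygon_def)
  define L where "L = lattice_points P"
  define d where "d = iwidth L w1"
  note L_props = lattice_polygon_lattice_points[OF lp, folded L_def]
  note lw_dir_P = lw_dir_lattice_polygon[OF lp, folded L_def]
  have width_P: "lattice_width P = of_int d"
    using w1(2) by (simp add: d_def lw_dir_P)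
  have ge_d: "d \<le> iwidth L w" if "primitive w" for w
    using lattice_width_le_lw_dir[OF lp that] by (simp add: width_P lw_dir_P)
  have unit: "d + 1 \<le> iwidth L u" if "\<bar>det2 w1 u\<bar> = 1" for u
  proof (rule ccontr)
    assume "\<not> d + 1 \<le> iwidth L u"
    then have "lw_dir P u \<le> lattice_width P"
      by (simp add: lw_dir_P width_P)
    then show False
      using partner[OF that] no_partner by blast
  qed
  then have wide: "d + \<bar>det2 w1 w\<bar> \<le> iwidth L w" if "primitive w" for w
    using ge_d[OF that] iwidth_ge_det[OF L_props(1,2) w1(1), of d]
    by (cases "det2 w1 w = 0") (auto simp: d_def)
  have "0 < iwidth L w" if "primitive w" for w
    using ge_d[OF that] pos width_P by simp
  then obtain v q0 where v: "v \<in> L" "lattice_pt v extreme_point_of P"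
    and q0: "q0 \<in> convex hull (lattice_pt ` (L - {v}))" "pair_ip q0 w1 = of_int (idot v w1)"
    using exists_vertex_with_level_witness[OF lp L_def] by metis
  have "convex P" "w1 \<noteq> (0, 0)"
    using L_props(3) w1(1) by (metis convex_convex_hull, simp add: primitive_def)
  then obtain q where q: "q \<in> convex hull (lattice_pt ` (L - {v}))"
    "\<And>w. \<bar>pair_ip q w - of_int (idot v w)\<bar> \<le> \<bar>of_int (det2 w1 w)\<bar>"
    using exists_point_near_vertex[OF _ L_def v(1) _ q0] by metis
  note P' = lattice_width_remove_vertex_ge[OF lp L_def v(1) q wide]
  have "convex hull (lattice_pt ` (L - {v})) \<subset> P"
    using L_props(3) v by (rule convex_hull_remove_extreme_point_psubset)
  then have "lattice_width (convex hull (lattice_pt ` (L - {v}))) < lattice_width P"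
    using P P'(1) unfolding minimal_polygon_def by blast
  then show False
    using P'(2) width_P by simp
qed

section \<open>Fitting into a square\<close>

lemma pair_ip_minus_Min_bounds:
  assumes "lattice_polygon P" "z \<in> P"
  shows "0 \<le> pair_ip z w - of_int (Min ((\<lambda>p. idot p w) ` lattice_points P))"
    and "pair_ip z w - of_int (Min ((\<lambda>p. idot p w) ` lattice_points P)) \<le> lw_dir P w"
  using pair_ip_hull_bounds[of "lattice_points P" z w] lattice_polygon_lattice_points[OF assms(1)] assms(2)
  by (auto simp: lw_dir_lattice_polygon[OF assms(1)] iwidth_def)

lemma unimodular_into_square:
  assumes P: "lattice_polygon P" and det: "\<bar>det2 u w\<bar> = 1"
    and "lw_dir P u \<le> real d" "lw_dir P w \<le> real d"
  shows "\<exists>\<phi>. unimodular \<phi> \<and> \<phi> ` P \<subseteq> {0..real d} \<times> {0..real d}"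
proof -
  define mu mw where "mu = Min ((\<lambda>p. idot p u) ` lattice_points P)"
    and "mw = Min ((\<lambda>p. idot p w) ` lattice_points P)"
  define \<phi> where "\<phi> = (\<lambda>(x :: real, y :: real). (of_int (fst u) * x + of_int (snd u) * y + of_int (- mu),
      of_int (fst w) * x + of_int (snd w) * y + of_int (- mw)))"
  have "unimodular \<phi>"
    unfolding unimodular_def
  proof (intro exI conjI)
    show "\<bar>fst u * snd w - snd u * fst w\<bar> = 1"
      using det by (simp add: det2_def)
  qed (fact \<phi>_def)
  moreover have "\<phi> z = (pair_ip z u - of_int mu, pair_ip z w - of_int mw)" for z
    by (cases z) (simp add: \<phi>_def pair_ip_def algebra_simps)
  then have "\<phi> z \<in> {0..real d} \<times> {0..real d}" if "z \<in> P" for z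
    using pair_ip_minus_Min_bounds[OF P that, of u] pair_ip_minus_Min_bounds[OF P that, of w] assms(3,4)
    by (simp add: mu_def mw_def)
  then have "\<phi> ` P \<subseteq> {0..real d} \<times> {0..real d}"
    by blast
  ultimately show ?thesis by blast
qed

lemma lattice_width_le_square:
  assumes P: "lattice_polygon P" and "unimodular \<phi>" "\<phi> ` P \<subseteq> {0..real k} \<times> {0..real k}"
  shows "lattice_width P \<le> real k"
proof -
  obtain a b c e t1 t2 :: int where det: "\<bar>a * e - b * c\<bar> = 1"
    and \<phi>: "\<phi> = (\<lambda>(x, y). (of_int a * x + of_int b * y + of_int t1, of_int c * x + of_int e * y + of_int t2))"
    using assms(2) unfolding unimodular_def by blast
  have "primitive (a, b)"
    using det det2_unit_imp_primitive[of "(a, b)" "(c, e)"] by (simp add: det2_def)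
  have strip: "0 \<le> idot p (a, b) + t1 \<and> idot p (a, b) + t1 \<le> int k" if "p \<in> lattice_points P" for p
  proof -
    have "fst (\<phi> (lattice_pt p)) \<in> {0..real k}"
      using assms(3) that by (auto simp: lattice_points_def)
    moreover have "fst (\<phi> (lattice_pt p)) = of_int (idot p (a, b) + t1)"
      by (simp add: \<phi> lattice_pt_def idot_def mult.commute)
    ultimately have "0 \<le> real_of_int (idot p (a, b) + t1)"
      "real_of_int (idot p (a, b) + t1) \<le> real_of_int (int k)"
      by simp_all
    then show ?thesis
      by (simp only: of_int_le_iff of_int_0_le_iff)
  qed
  obtain p q where pq: "p \<in> lattice_points P" "q \<in> lattice_points P"
    "iwidth (lattice_points P) (a, b) = idot p (a, b) - idot q (a, b)"
    using iwidth_attained lattice_polygon_lattice_points[OF P] by metis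
  then have "iwidth (lattice_points P) (a, b) \<le> int k"
    using strip[OF pq(1)] strip[OF pq(2)] by linarith
  then have "lw_dir P (a, b) \<le> real k"
    unfolding lw_dir_lattice_polygon[OF P] by (metis of_int_le_iff of_int_of_nat_eq)
  then show ?thesis
    using lattice_width_le_lw_dir[OF P \<open>primitive (a, b)\<close>] by simp
qed

theorem lemma2p3:
  fixes P :: "(real \<times> real) set" and d :: nat
  assumes "lattice_polygon P" and "P \<noteq> {}" and "minimal_polygon P"
    and "lattice_width P = real d" and "d > 0"
  shows "ls_square P = d"
proof -
  obtain w1 where w1: "primitive w1" "lattice_width P = lw_dir P w1"
    using lattice_width_attained[OF assms(1)] .
  obtain u where u: "\<bar>det2 w1 u\<bar> = 1" "lw_dir P u \<le> real d"
    using minimal_polygon_unimodular_partner[OF assms(3) w1] assms(4,5) by auto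
  have "\<bar>det2 u w1\<bar> = 1"
    using u(1) by (simp add: det2_swap[of u])
  moreover have "lw_dir P w1 \<le> real d"
    using w1(2) assms(4) by simp
  ultimately have "\<exists>\<phi>. unimodular \<phi> \<and> \<phi> ` P \<subseteq> {0..real d} \<times> {0..real d}"
    using unimodular_into_square[OF assms(1)] u(2) by blast
  moreover have "d \<le> k" if "\<exists>\<phi>. unimodular \<phi> \<and> \<phi> ` P \<subseteq> {0..real k} \<times> {0..real k}" for k
    using that lattice_width_le_square[OF assms(1)] assms(4) by fastforce
  ultimately show ?thesis
    unfolding ls_square_def by (rule Least_equality)
qed

end
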